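(* Let $H=(T_1,\dots,T_n,p_1,\dots,p_n)$ be a strategic game with a belief structure satisfying properties A and B. Then for every relaxation $R$ of $\overline{LR}$, every $i\in[1..n]$, every ordinal $\alpha$, every $\mu_i\in\mathcal B_i\,\dot\cap\,R^{\alpha}$ and every $s_i\in T_i$: if $s_i\in BR_{R^{\alpha}}(\mu_i)$ then $s_i\in BR_H(\mu_i)$.
   Context: A strategic game $H=(T_1,\dots,T_n,p_1,\dots,p_n)$ has nonempty strategy sets $T_i$ and real payoffs. A restriction is $G=(S_1,\dots,S_n)$ with $S_i\subseteq T_i$ (possibly empty), ordered by componentwise inclusion (a complete lattice with top $H$). A belief structure gives each player $i$ a nonempty belief set $\mathcal B_i$, an expected payoff $p_i:T_i\times\mathcal B_i\to\mathbb R$, and for each restriction $G$ a set $\mathcal B_i\,\dot\cap\,G\subseteq\mathcal B_i$, with $\mathcal B_i\,\dot\cap\,H=\mathcal B_i$. Property A: $G_1\subseteq G_2\subseteq H$ implies $\mathcal B_i\,\dot\cap\,G_1\subseteq\mathcal B_i\,\dot\cap\,G_2$ for all $i$. Best response: for $G=(S_1,\dots,S_n)$, $s_i\in T_i$ is in $BR_G(\mu_i)$ iff $p_i(s_i,\mu_i)\ge p_i(s_i',\mu_i)$ for all $s_i'\in S_i$. Property B: for every $i$ and every $\mu_i\in\mathcal B_i$, $BR_H(\mu_i)\neq\emptyset$. The operator $LR$ maps $G$ to $(S_1',\dots,S_n')$ with $S_i':=\{s_i\in T_i\mid\exists\mu_i\in\mathcal B_i\,\dot\cap\,G:\ s_i\in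 BR_G(\mu_i)\}$, and $\overline{LR}(G):=LR(G)\cap G$. Iterations: $T^0:=H$, $T^{\alpha+1}:=T(T^\alpha)$, $T^\beta:=\bigcap_{\alpha<\beta}T^\alpha$ for limit $\beta$. $R$ is a relaxation of $T$ if for all ordinals $\alpha$: (1) $T(R^\alpha)\subseteq R(R^\alpha)$; (2) if $T(R^\alpha)\subseteq R^\alpha$ then $R(R^\alpha)\subseteq R^\alpha$; (3) if $R(R^\alpha)=R^\alpha$ then $T(R^\alpha)=R^\alpha$. *)

theory Defs
  imports Complex_Main
begin

text \<open>A restriction is a function G :: 'p \<Rightarrow> 's set with G i \<subseteq> T i; the order is the
pointwise (componentwise) inclusion order on functions.\<close>

definition is_restriction :: "('p \<Rightarrow> 's set) \<Rightarrow> ('p \<Rightarrow> 's set) \<Rightarrow> bool" where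
  "is_restriction T G \<longleftrightarrow> (\<forall>i. G i \<subseteq> T i)"

definition BR :: "('p \<Rightarrow> 's set) \<Rightarrow> ('p \<Rightarrow> 's \<Rightarrow> 'b \<Rightarrow> real) \<Rightarrow> ('p \<Rightarrow> 's set)
                  \<Rightarrow> 'p \<Rightarrow> 'b \<Rightarrow> 's set" where
  "BR T ep G i \<mu> = {s \<in> T i. \<forall>s' \<in> G i. ep i s \<mu> \<ge> ep i s' \<mu>}"

definition LR :: "('p \<Rightarrow> 's set) \<Rightarrow> ('p \<Rightarrow> 's \<Rightarrow> 'b \<Rightarrow> real) \<Rightarrow> ('p \<Rightarrow> ('p \<Rightarrow> 's set) \<Rightarrow> 'b set)
                  \<Rightarrow> ('p \<Rightarrow> 's set) \<Rightarrow> ('p \<Rightarrow> 's set)" where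
  "LR T ep bc G = (\<lambda>i. {s \<in> T i. \<exists>\<mu> \<in> bc i G. s \<in> BR T ep G i \<mu>})"

definition LRbar :: "('p \<Rightarrow> 's set) \<Rightarrow> ('p \<Rightarrow> 's \<Rightarrow> 'b \<Rightarrow> real) \<Rightarrow> ('p \<Rightarrow> ('p \<Rightarrow> 's set) \<Rightarrow> 'b set)
                  \<Rightarrow> ('p \<Rightarrow> 's set) \<Rightarrow> ('p \<Rightarrow> 's set)" where
  "LRbar T ep bc G = inf (LR T ep bc G) G"

text \<open>Transfinite iteration F^alpha starting from H, indexed by elements of a well-order
type 'o (playing the role of ordinals): F^0 = H, F^(beta+1) = F (F^beta), and at limits
F^lambda = the intersection of all earlier iterates.\<close>

definition is_succ_of :: "'o::wellorder \<Rightarrow> 'o \<Rightarrow> bool" where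
  "is_succ_of \<alpha> \<beta> \<longleftrightarrow> \<beta> < \<alpha> \<and> (\<forall>\<gamma>. \<beta> < \<gamma> \<longrightarrow> \<alpha> \<le> \<gamma>)"

definition titer :: "('p \<Rightarrow> 's set) \<Rightarrow> (('p \<Rightarrow> 's set) \<Rightarrow> ('p \<Rightarrow> 's set)) \<Rightarrow> 'o::wellorder
                     \<Rightarrow> ('p \<Rightarrow> 's set)" where
  "titer H F = wfrec {(x, y). x < y}
     (\<lambda>f \<alpha>. if \<not> (\<exists>\<beta>. \<beta> < \<alpha>) then H
            else if (\<exists>\<beta>. is_succ_of \<alpha> \<beta>) then F (f (THE \<beta>. is_succ_of \<alpha> \<beta>))
            else Inf (f ` {\<beta>. \<beta> < \<alpha>}))"

definition relaxation :: "'o::wellorder itself \<Rightarrow> ('p \<Rightarrow> 's set)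
      \<Rightarrow> (('p \<Rightarrow> 's set) \<Rightarrow> ('p \<Rightarrow> 's set)) \<Rightarrow> (('p \<Rightarrow> 's set) \<Rightarrow> ('p \<Rightarrow> 's set)) \<Rightarrow> bool" where
  "relaxation (_ :: 'o itself) H T R \<longleftrightarrow>
     (\<forall>\<alpha>::'o.
        T (titer H R \<alpha>) \<le> R (titer H R \<alpha>)
      \<and> (T (titer H R \<alpha>) \<le> titer H R \<alpha> \<longrightarrow> R (titer H R \<alpha>) \<le> titer H R \<alpha>)
      \<and> (R (titer H R \<alpha>) = titer H R \<alpha> \<longrightarrow> T (titer H R \<alpha>) = titer H R \<alpha>))"

end

theory Submission
  imports Defs
begin

text \<open>Every iterate G of R satisfies the invariant that, for each belief in
\<open>bc j G\<close>, all its best responses in the full game survive in G. It holds for H, it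
passes to nonempty intersections by Property A, and it passes from G to R G because the
relaxation conditions squeeze R G between \<open>LRbar G\<close> and G, while a global best
response to a belief admissible in G is in particular a best response within G.
Property B then supplies a global best response t in the iterate, and any
\<open>s \<in> BR_G(\<mu>)\<close> does at least as well as t, hence as well as every strategy.\<close>

lemma is_succ_of_unique:
  "is_succ_of (\<alpha>::'o::wellorder) \<beta> \<Longrightarrow> is_succ_of \<alpha> \<gamma> \<Longrightarrow> \<beta> = \<gamma>"
  unfolding is_succ_of_def by (meson antisym_conv3 not_le)

lemma titer_unfold:
  "titer H F (\<alpha>::'o::wellorder) =
     (if \<not> (\<exists>\<beta>. \<beta> < \<alpha>) then H
      else if (\<exists>\<beta>. is_succ_of \<alpha> \<beta>) then F (titer H F (THE \<beta>. is_succ_of \<alpha> \<beta>))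
      else Inf (titer H F ` {\<beta>. \<beta> < \<alpha>}))"
proof -
  have "(THE \<beta>. is_succ_of \<alpha> \<beta>) < \<alpha>" if "is_succ_of \<alpha> \<beta>" for \<beta>
    using theI[of "is_succ_of \<alpha>", OF that is_succ_of_unique[OF _ that]]
    by (simp add: is_succ_of_def)
  then show ?thesis
    unfolding titer_def
    by (subst wfrec[OF wellorder_class.wf]) (auto simp: cut_apply image_def)
qed

lemma titer_induct:
  fixes \<alpha> :: "'o::wellorder"
  assumes base: "P H"
    and step: "\<And>\<beta>::'o. P (titer H F \<beta>) \<Longrightarrow> P (F (titer H F \<beta>))"
    and Inf: "\<And>A. A \<noteq> {} \<Longrightarrow> (\<And>G. G \<in> A \<Longrightarrow> P G) \<Longrightarrow> P (Inf A)"
  shows "P (titer H F \<alpha>)"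
proof (induction \<alpha> rule: less_induct)
  case (less \<alpha>)
  consider (zero) "\<not> (\<exists>\<beta>. \<beta> < \<alpha>)"
    | (succ) \<beta> where "is_succ_of \<alpha> \<beta>"
    | (limit) "\<exists>\<beta>. \<beta> < \<alpha>" "\<not> (\<exists>\<beta>. is_succ_of \<alpha> \<beta>)"
    by blast
  then show ?case
  proof cases
    case zero
    then show ?thesis by (subst titer_unfold) (simp add: base)
  next
    case (succ \<beta>)
    have "(THE \<beta>. is_succ_of \<alpha> \<beta>) = \<beta>"
      using succ by (rule the_equality[OF _ is_succ_of_unique[OF _ succ]])
    moreover have "\<beta> < \<alpha>" using succ by (simp add: is_succ_of_def)
    ultimately have "titer H F \<alpha> = F (titer H F \<beta>)"
      using succ by (subst titer_unfold) auto
    with \<open>\<beta> < \<alpha>\<close> show ?thesis using step less by simp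
  next
    case limit
    then show ?thesis by (subst titer_unfold) (auto intro!: Inf less)
  qed
qed

lemma relaxation_deflationary_bounds:
  fixes \<beta> :: "'o::wellorder"
  assumes "relaxation TYPE('o) H F R" and "\<And>G. F G \<le> G"
  shows "F (titer H R \<beta>) \<le> R (titer H R \<beta>)" and "R (titer H R \<beta>) \<le> titer H R \<beta>"
  using assms unfolding relaxation_def by blast+

lemma LRbar_le: "LRbar T ep bc G \<le> G"
  by (simp add: LRbar_def)

definition contains_best_responses ::
    "('p \<Rightarrow> 's set) \<Rightarrow> ('p \<Rightarrow> 's \<Rightarrow> 'b \<Rightarrow> real) \<Rightarrow> ('p \<Rightarrow> ('p \<Rightarrow> 's set) \<Rightarrow> 'b set)
      \<Rightarrow> ('p \<Rightarrow> 's set) \<Rightarrow> bool" where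
  "contains_best_responses T ep bc G \<longleftrightarrow>
     G \<le> T \<and> (\<forall>j. \<forall>\<nu> \<in> bc j G. BR T ep T j \<nu> \<subseteq> G j)"

lemma contains_best_responses_top: "contains_best_responses T ep bc T"
  by (auto simp: contains_best_responses_def BR_def)

lemma contains_best_responses_Inf:
  assumes propA: "\<forall>G1 G2. G1 \<le> G2 \<and> G2 \<le> T \<longrightarrow> (\<forall>i. bc i G1 \<subseteq> bc i G2)"
    and "A \<noteq> {}" and A: "\<And>G. G \<in> A \<Longrightarrow> contains_best_responses T ep bc G"
  shows "contains_best_responses T ep bc (Inf A)"
  unfolding contains_best_responses_def
proof (intro conjI ballI allI subsetI)
  obtain G where "G \<in> A" using \<open>A \<noteq> {}\<close> by blast
  then show "Inf A \<le> T"
    using A Inf_lower order_trans unfolding contains_best_responses_def by metis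
  fix j \<nu> t
  assume \<nu>: "\<nu> \<in> bc j (Inf A)" and t: "t \<in> BR T ep T j \<nu>"
  have "t \<in> G j" if "G \<in> A" for G
  proof -
    have "\<nu> \<in> bc j G"
      using propA \<nu> Inf_lower[OF that] A[OF that] unfolding contains_best_responses_def by blast
    then show ?thesis using A[OF that] t unfolding contains_best_responses_def by blast
  qed
  then show "t \<in> Inf A j" by (simp add: Inf_apply)
qed

lemma contains_best_responses_between:
  assumes propA: "\<forall>G1 G2. G1 \<le> G2 \<and> G2 \<le> T \<longrightarrow> (\<forall>i. bc i G1 \<subseteq> bc i G2)"
    and G: "contains_best_responses T ep bc G"
    and lower: "LRbar T ep bc G \<le> G'" and upper: "G' \<le> G"
  shows "contains_best_responses T ep bc G'"
  unfolding contains_best_responses_def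
proof (intro conjI ballI allI subsetI)
  have "G \<le> T" using G by (simp add: contains_best_responses_def)
  then show "G' \<le> T" using upper by simp
  fix j \<nu> t
  assume "\<nu> \<in> bc j G'" and t: "t \<in> BR T ep T j \<nu>"
  then have \<nu>: "\<nu> \<in> bc j G" using propA upper \<open>G \<le> T\<close> by blast
  then have "t \<in> G j" using G t by (auto simp: contains_best_responses_def)
  moreover have "t \<in> BR T ep G j \<nu>"
    using t \<open>G \<le> T\<close> by (auto simp: BR_def le_fun_def)
  ultimately have "t \<in> LRbar T ep bc G j"
    using \<nu> t by (auto simp: LRbar_def LR_def BR_def)
  then show "t \<in> G' j" using lower by (auto simp: le_fun_def)
qed

lemma BR_top_if_dominates_best_response:
  assumes "s \<in> BR T ep G i \<mu>" and "t \<in> G i" and "t \<in> BR T ep T i \<mu>"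
  shows "s \<in> BR T ep T i \<mu>"
  using assms by (force simp: BR_def)

theorem mainTheorem6:
  fixes T :: "'p::finite \<Rightarrow> 's set"
    and B :: "'p \<Rightarrow> 'b set"
    and ep :: "'p \<Rightarrow> 's \<Rightarrow> 'b \<Rightarrow> real"
    and bc :: "'p \<Rightarrow> ('p \<Rightarrow> 's set) \<Rightarrow> 'b set"
    and R :: "('p \<Rightarrow> 's set) \<Rightarrow> ('p \<Rightarrow> 's set)"
    and \<alpha> :: "'o::wellorder"
  assumes T_ne: "\<forall>i. T i \<noteq> {}"
    and B_ne: "\<forall>i. B i \<noteq> {}"
    and bc_sub: "\<forall>i G. is_restriction T G \<longrightarrow> bc i G \<subseteq> B i"
    and bc_top: "\<forall>i. bc i T = B i"
    and propA: "\<forall>G1 G2. G1 \<le> G2 \<and> G2 \<le> T \<longrightarrow> (\<forall>i. bc i G1 \<subseteq> bc i G2)"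
    and propB: "\<forall>i. \<forall>\<mu> \<in> B i. BR T ep T i \<mu> \<noteq> {}"
    and relax: "relaxation TYPE('o) T (LRbar T ep bc) R"
    and mu: "\<mu> \<in> bc i (titer T R \<alpha>)"
    and s: "s \<in> BR T ep (titer T R \<alpha>) i \<mu>"
  shows "s \<in> BR T ep T i \<mu>"
proof -
  have inv: "contains_best_responses T ep bc (titer T R \<alpha>)"
  proof (induction rule: titer_induct)
    case 1
    show ?case by (rule contains_best_responses_top)
  next
    case (2 \<beta>)
    with relaxation_deflationary_bounds[OF relax LRbar_le]
    show ?case by (blast intro: contains_best_responses_between[OF propA])
  next
    case (3 A)
    then show ?case by (rule contains_best_responses_Inf[OF propA])
  qed
  then have "is_restriction T (titer T R \<alpha>)"
    by (simp add: contains_best_responses_def is_restriction_def le_fun_def)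
  then have "\<mu> \<in> B i" using bc_sub mu by blast
  then obtain t where t: "t \<in> BR T ep T i \<mu>" using propB by blast
  with inv mu have "t \<in> titer T R \<alpha> i" by (auto simp: contains_best_responses_def)
  then show ?thesis by (rule BR_top_if_dominates_best_response[OF s _ t])
qed

end
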